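(* Let $d\ge 10$. For $a\ge0$ let $u(a,\cdot)$ be the solution of $$y^{2}(1-y^{2})u''+\big((d-3)y-2y^{3}\big)u'+(d-2)u(1-u^{2})=0$$ with $u(a,y)=1-ay^{2}+O(y^{4})$ as $y\to0$, and let $c(a)=\lim_{y\to1^-}u(a,y)$. Then the function $a\mapsto c(a)$ is monotone decreasing on $[0,\infty)$, with $c(0)=1$ and $\lim_{a\to\infty}c(a)=0$.
   Context: For each $a\ge0$ there is a unique solution $u(a,y)$ of the equation, analytic in $(a,y)$ near $y=0$, with expansion $u(a,y)=1-ay^2+O(y^4)$ near $y=0$; it extends to a solution on $[0,1)$ and the limit $\lim_{y\to1^-}u(a,y)$ exists and is finite. *)

theory Defs
  imports "HOL-Analysis.Analysis"
begin

definition profile_solution ::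
  "nat \<Rightarrow> real \<Rightarrow> (real \<Rightarrow> real) \<Rightarrow> (real \<Rightarrow> real) \<Rightarrow> (real \<Rightarrow> real) \<Rightarrow> bool" where
  "profile_solution d a v v1 v2 \<longleftrightarrow>
     (\<forall>y\<in>{0<..<1}.
        (v has_real_derivative v1 y) (at y) \<and>
        (v1 has_real_derivative v2 y) (at y) \<and>
        y^2 * (1 - y^2) * v2 y + ((real d - 3) * y - 2 * y^3) * v1 y
          + (real d - 2) * v y * (1 - (v y)^2) = 0) \<and>
     (\<lambda>y. v y - (1 - a * y^2)) \<in> O[at_right 0](\<lambda>y. y^4)"

end

theory Submission
  imports Defs "HOL-Real_Asymp.Real_Asymp"
begin

text \<open>
  Everything rests on a comparison principle for the profile operator: if U and V have limits
  at 0, V < U near 0, and the residual of V is at most that of U on (0,1), then V < U on (0,1).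
  Otherwise z = y^3 (U - V) has a positive interior maximum; there z' = 0 means
  y (U - V)' = -3 (U - V), and substituting this into the equation, using that v (1 - v^2) has
  difference quotients at most 1, gives (1 - y^2) z'' \<ge> y (U - V) (2 d - 19 + 6 y^2) > 0
  for d \<ge> 10, a contradiction.

  The expansions u(a,y) = 1 - a y^2 + O(y^4) order the solutions near 0, so u(a,y) and with it
  c(a) decrease in a. For small e > 0 the functions 1 \<plusminus> e (y^2 + 4 y^4) are a super- and a
  subsolution squeezing u(0,.), which gives c(0) = 1. Finally 0 is a solution and
  1 / sqrt (1 + a y^2) a supersolution, so 0 \<le> c(a) \<le> 1 / sqrt (1 + a).
\<close>

lemma eventually_pos_of_quadratic_lower_bound:
  fixes F R :: "real \<Rightarrow> real"
  assumes "0 < \<alpha>" "R \<in> O[at_right 0](\<lambda>y. y^4)"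
    and "\<forall>\<^sub>F y in at_right 0. \<alpha> * y^2 + R y \<le> F y"
  shows "\<forall>\<^sub>F y in at_right 0. 0 < F y"
proof -
  have "(\<lambda>y::real. y^4) \<in> o[at_right 0](\<lambda>y. y^2)" by real_asymp
  with assms(2) have "R \<in> o[at_right 0](\<lambda>y. y^2)" by (rule landau_o.big_small_trans)
  from landau_o.smallD[OF this, of "\<alpha>/2"]
  have "\<forall>\<^sub>F y in at_right 0. \<bar>R y\<bar> \<le> \<alpha>/2 * y^2"
    using assms(1) by simp
  with assms(3) eventually_at_right_less[of 0]
  show ?thesis
  proof eventually_elim
    case (elim y)
    moreover have "0 < \<alpha> * y^2" using assms(1) elim by simp
    ultimately show ?case by linarith
  qed
qed

lemma continuous_on_interior_max:
  fixes f :: "real \<Rightarrow> real"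
  assumes "continuous_on {a..b} f" "a < e" "e < b" "f a < f e" "f b < f e"
  obtains x where "a < x" "x < b" "f e \<le> f x" "\<And>t. a \<le> t \<Longrightarrow> t \<le> b \<Longrightarrow> f t \<le> f x"
proof -
  obtain x where x: "x \<in> {a..b}" and max: "\<And>t. t \<in> {a..b} \<Longrightarrow> f t \<le> f x"
    using continuous_attains_sup[OF compact_Icc _ assms(1)] assms(2,3) by fastforce
  have "f e \<le> f x" using max assms(2,3) by simp
  with x assms(4,5) have "a < x" "x < b" by (auto simp: order.order_iff_strict)
  with \<open>f e \<le> f x\<close> max show ?thesis by (intro that) auto
qed

lemma DERIV_interior_max:
  fixes f f' :: "real \<Rightarrow> real"
  assumes "a < x" "x < b"
    and f': "\<And>t. a < t \<Longrightarrow> t < b \<Longrightarrow> (f has_real_derivative f' t) (at t)"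
    and f'': "(f' has_real_derivative f'') (at x)"
    and max: "\<And>t. a < t \<Longrightarrow> t < b \<Longrightarrow> f t \<le> f x"
  shows "f' x = 0" "f'' \<le> 0"
proof -
  show f'x: "f' x = 0"
    by (rule DERIV_local_max[OF f'[OF assms(1,2)], of "min (x - a) (b - x)"])
       (use assms in \<open>auto simp: abs_less_iff intro!: max\<close>)
  show "f'' \<le> 0"
  proof (rule ccontr)
    assume "\<not> f'' \<le> 0"
    with DERIV_pos_inc_right[OF f''] f'x
    obtain e where e: "0 < e" "\<And>h. 0 < h \<Longrightarrow> h < e \<Longrightarrow> 0 < f' (x + h)"
      by force
    define t where "t = x + min e (b - x) / 2"
    have t: "x < t" "t < b" "t < x + e"
      using e assms unfolding t_def by (auto simp: min_def field_simps)
    have "f x < f t"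
    proof (rule DERIV_pos_imp_increasing_open[OF \<open>x < t\<close>])
      fix s assume "x < s" "s < t"
      then show "\<exists>l. (f has_real_derivative l) (at s) \<and> 0 < l"
        using f' e(2)[of "s - x"] t assms by (intro exI[of _ "f' s"]) auto
    next
      show "continuous_on {x..t} f"
        using t assms by (intro continuous_at_imp_continuous_on ballI DERIV_isCont[OF f']) auto
    qed
    moreover have "f t \<le> f x" using max t assms by simp
    ultimately show False by simp
  qed
qed

lemma tendsto_at_left_1_le:
  fixes f g :: "real \<Rightarrow> real"
  assumes "(f \<longlongrightarrow> A) (at_left 1)" "(g \<longlongrightarrow> B) (at_left 1)"
    and "\<And>y. 0 < y \<Longrightarrow> y < 1 \<Longrightarrow> f y \<le> g y"
  shows "A \<le> B"
proof (rule tendsto_le[OF trivial_limit_at_left_real assms(2,1)])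
  show "\<forall>\<^sub>F y in at_left 1. f y \<le> g y"
    using eventually_at_left_real[OF zero_less_one] by eventually_elim (use assms(3) in auto)
qed

lemma inverse_sqrt_ge:
  fixes x :: real
  assumes "0 \<le> x"
  shows "1 - x/2 \<le> 1 / sqrt (1 + x)"
proof -
  have "(1 - x/2) * (1 + x/2) \<le> 1" by (simp add: algebra_simps power2_eq_square)
  then have "1 - x/2 \<le> 1 / (1 + x/2)" using assms by (simp add: field_simps)
  moreover have "sqrt (1 + x) \<le> sqrt ((1 + x/2)^2)"
    by (rule real_sqrt_le_mono) (simp add: power2_eq_square algebra_simps)
  then have "1 / (1 + x/2) \<le> 1 / sqrt (1 + x)"
    using assms by (intro divide_left_mono) auto
  ultimately show ?thesis by linarith
qed

lemma inverse_sqrt_derivatives: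
  fixes a y :: real
  assumes "0 \<le> a"
  defines "S \<equiv> \<lambda>s. sqrt (1 + a * s^2)"
  shows "((\<lambda>s. 1 / S s) has_real_derivative - a * y / S y ^ 3) (at y)"
    and "((\<lambda>s. - a * s / S s ^ 3) has_real_derivative - a / S y ^ 3 + 3 * a^2 * y^2 / S y ^ 5) (at y)"
proof -
  have "0 < 1 + a * y^2" using assms by (simp add: add_pos_nonneg)
  then have "0 < S y" unfolding S_def by simp
  from \<open>0 < 1 + a * y^2\<close>
  show d1: "((\<lambda>s. 1 / S s) has_real_derivative - a * y / S y ^ 3) (at y)"
    unfolding S_def by (auto intro!: derivative_eq_intros simp: field_simps power3_eq_cube)
  have "((\<lambda>s. - a * s * (1 / S s) ^ 3) has_real_derivative
      - a * 1 * (1 / S y) ^ 3 + of_nat 3 * (- a * y / S y ^ 3 * (1 / S y) ^ (3 - Suc 0)) * (- a * y))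
      (at y)"
    by (rule DERIV_mult[OF DERIV_cmult[OF DERIV_ident] DERIV_power[OF d1]])
  then show "((\<lambda>s. - a * s / S s ^ 3) has_real_derivative
      - a / S y ^ 3 + 3 * a^2 * y^2 / S y ^ 5) (at y)"
    using \<open>0 < S y\<close> by (simp add: field_simps eval_nat_numeral)
qed

definition profile_residual :: "nat \<Rightarrow> real \<Rightarrow> real \<Rightarrow> real \<Rightarrow> real \<Rightarrow> real" where
  "profile_residual d y v v1 v2 =
     y^2 * (1 - y^2) * v2 + ((real d - 3) * y - 2 * y^3) * v1 + (real d - 2) * v * (1 - v^2)"

lemma profile_solutionD:
  assumes "profile_solution d a v v1 v2" "0 < y" "y < 1"
  shows "(v has_real_derivative v1 y) (at y)" "(v1 has_real_derivative v2 y) (at y)"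
    and "profile_residual d y (v y) (v1 y) (v2 y) = 0"
  using assms unfolding profile_solution_def profile_residual_def by auto

lemma profile_solution_expansion:
  "profile_solution d a v v1 v2 \<Longrightarrow> (\<lambda>y. v y - (1 - a * y^2)) \<in> O[at_right 0](\<lambda>y. y^4)"
  unfolding profile_solution_def by blast

lemma profile_solution_tendsto_1:
  assumes "profile_solution d a v v1 v2"
  shows "(v \<longlongrightarrow> 1) (at_right 0)"
proof -
  have "(\<lambda>y::real. y^4) \<in> o[at_right 0](\<lambda>_. 1)" by real_asymp
  with profile_solution_expansion[OF assms]
  have "(\<lambda>y. v y - (1 - a * y^2)) \<in> o[at_right 0](\<lambda>_. 1)"
    by (rule landau_o.big_small_trans)
  from smalloD_tendsto[OF this]
  have "((\<lambda>y. v y - (1 - a * y^2)) \<longlongrightarrow> 0) (at_right 0)" by simp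
  moreover have "((\<lambda>y::real. 1 - a * y^2) \<longlongrightarrow> 1) (at_right 0)"
    by (auto intro!: tendsto_eq_intros)
  ultimately have "((\<lambda>y. (v y - (1 - a * y^2)) + (1 - a * y^2)) \<longlongrightarrow> 0 + 1) (at_right 0)"
    by (rule tendsto_add)
  then show ?thesis by simp
qed

text \<open>With z = y^3 (U - V), the hypothesis crit says z' = 0 and the conclusion says z'' > 0.\<close>

lemma profile_gap_second_derivative_pos:
  fixes d :: nat and y U U1 U2 V V1 V2 :: real
  assumes "d \<ge> 10" "0 < y" "y < 1" "V < U"
    and crit: "y * (U1 - V1) = -3 * (U - V)"
    and res: "profile_residual d y V V1 V2 \<le> profile_residual d y U U1 U2"
  shows "0 < 6 * y * (U - V) + 6 * y^2 * (U1 - V1) + y^3 * (U2 - V2)"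
proof -
  define W where "W = U - V"
  have W: "0 < W" using assms unfolding W_def by simp
  have "U * (1 - U^2) - V * (1 - V^2) = W * (1 - (U^2 + U * V + V^2))"
    unfolding W_def by (simp add: algebra_simps power2_eq_square)
  also have "\<dots> \<le> W"
  proof -
    have "0 \<le> (U + V)^2 + U^2 + V^2" by simp
    then have "0 \<le> U^2 + U * V + V^2" unfolding power2_sum by linarith
    then show ?thesis using W by (simp add: mult_le_cancel_left1)
  qed
  finally have cubic_gap: "U * (1 - U^2) - V * (1 - V^2) \<le> W" .
  have "y^2 * (1 - y^2) * (U2 - V2)
      \<ge> - ((real d - 3) - 2 * y^2) * (y * (U1 - V1)) - (real d - 2) * (U * (1 - U^2) - V * (1 - V^2))"
    using res unfolding profile_residual_def by (simp add: algebra_simps power2_eq_square power3_eq_cube)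
  moreover have "(real d - 2) * (U * (1 - U^2) - V * (1 - V^2)) \<le> (real d - 2) * W"
    using cubic_gap assms(1) by (intro mult_left_mono) auto
  ultimately have W2: "y^2 * (1 - y^2) * (U2 - V2) \<ge> W * (2 * real d - 7 - 6 * y^2)"
    unfolding crit W_def by (simp add: algebra_simps)
  have "(1 - y^2) * (6 * y * (U - V) + 6 * y^2 * (U1 - V1) + y^3 * (U2 - V2))
      = 6 * y * W * (1 - y^2) + 6 * y * (1 - y^2) * (y * (U1 - V1)) + y * (y^2 * (1 - y^2) * (U2 - V2))"
    unfolding W_def by (simp add: algebra_simps power2_eq_square power3_eq_cube)
  also have "\<dots> \<ge> y * W * (2 * real d - 19 + 6 * y^2)"
    using mult_left_mono[OF W2, of y] assms(2) unfolding crit W_def by (simp add: algebra_simps)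
  finally have "y * W * (2 * real d - 19 + 6 * y^2)
      \<le> (1 - y^2) * (6 * y * (U - V) + 6 * y^2 * (U1 - V1) + y^3 * (U2 - V2))" .
  moreover have "0 < y * W * (2 * real d - 19 + 6 * y^2)"
    using assms(1,2) W by (intro mult_pos_pos) (auto intro: add_pos_nonneg)
  ultimately have "0 < (1 - y^2) * (6 * y * (U - V) + 6 * y^2 * (U1 - V1) + y^3 * (U2 - V2))"
    by linarith
  moreover have "0 < 1 - y^2" using assms(2,3) by (simp add: power_less_one_iff)
  ultimately show ?thesis by (simp add: zero_less_mult_iff)
qed

lemma profile_comparison:
  fixes d :: nat and U U' U'' V V' V'' :: "real \<Rightarrow> real"
  assumes "d \<ge> 10"
    and U: "\<And>t. 0 < t \<Longrightarrow> t < 1 \<Longrightarrow>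
      (U has_real_derivative U' t) (at t) \<and> (U' has_real_derivative U'' t) (at t)"
    and V: "\<And>t. 0 < t \<Longrightarrow> t < 1 \<Longrightarrow>
      (V has_real_derivative V' t) (at t) \<and> (V' has_real_derivative V'' t) (at t)"
    and res: "\<And>t. 0 < t \<Longrightarrow> t < 1 \<Longrightarrow>
      profile_residual d t (V t) (V' t) (V'' t) \<le> profile_residual d t (U t) (U' t) (U'' t)"
    and lim_U: "(U \<longlongrightarrow> l) (at_right 0)" and lim_V: "(V \<longlongrightarrow> m) (at_right 0)"
    and near_0: "\<forall>\<^sub>F t in at_right 0. V t < U t"
    and y: "0 < y" "y < 1"
  shows "V y < U y"
proof (rule ccontr)
  assume "\<not> V y < U y"
  define z where "z t = t^3 * (U t - V t)" for t
  define z' where "z' t = 3 * t^2 * (U t - V t) + t^3 * (U' t - V' t)" for t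
  define z'' where "z'' t = 6 * t * (U t - V t) + 6 * t^2 * (U' t - V' t) + t^3 * (U'' t - V'' t)" for t
  have dz: "(z has_real_derivative z' t) (at t)" "(z' has_real_derivative z'' t) (at t)"
    if "0 < t" "t < 1" for t
    unfolding z_def z'_def z''_def using U[OF that] V[OF that]
    by (auto intro!: derivative_eq_intros simp: algebra_simps power2_eq_square power3_eq_cube)
  have "(z \<longlongrightarrow> 0^3 * (l - m)) (at_right 0)"
    unfolding z_def by (intro tendsto_mult tendsto_power tendsto_ident_at tendsto_diff lim_U lim_V)
  then have z_0: "(z \<longlongrightarrow> 0) (at_right 0)" by simp
  have "\<forall>\<^sub>F t in at_right 0. t \<in> {0<..<y} \<and> V t < U t"
    using eventually_at_right_real[OF y(1)] near_0 by eventually_elim auto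
  then obtain e where "e \<in> {0<..<y}" "V e < U e"
    using eventually_happens'[OF trivial_limit_at_right_real] by blast
  then have e: "0 < e" "e < y" "0 < z e" unfolding z_def by auto
  have "\<forall>\<^sub>F t in at_right 0. t \<in> {0<..<e} \<and> z t < z e"
    using eventually_at_right_real[OF e(1)] order_tendstoD(2)[OF z_0 e(3)] by eventually_elim auto
  then obtain \<epsilon> where \<epsilon>: "\<epsilon> \<in> {0<..<e}" "z \<epsilon> < z e"
    using eventually_happens'[OF trivial_limit_at_right_real] by blast
  have "z y \<le> 0"
    using \<open>\<not> V y < U y\<close> y unfolding z_def by (simp add: mult_nonneg_nonpos)
  then have "z y < z e" using e(3) by linarith
  moreover have "continuous_on {\<epsilon>..y} z"
    using \<epsilon> e y by (intro continuous_at_imp_continuous_on ballI DERIV_isCont[OF dz(1)]) auto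
  ultimately obtain x
    where x: "\<epsilon> < x" "x < y" "z e \<le> z x" "\<And>t. \<epsilon> \<le> t \<Longrightarrow> t \<le> y \<Longrightarrow> z t \<le> z x"
    using continuous_on_interior_max[of \<epsilon> y z e] \<epsilon> e by auto
  have x01: "0 < x" "x < 1" using x \<epsilon> y by auto
  have "z' x = 0" "z'' x \<le> 0"
    using DERIV_interior_max[OF x(1,2) _ dz(2)[OF x01], of z] dz(1) x(4) \<epsilon> y by auto
  have "0 < z x" using x(3) e by linarith
  then have "V x < U x" using x01 unfolding z_def by (simp add: zero_less_mult_iff)
  moreover have "x^2 * (x * (U' x - V' x) + 3 * (U x - V x)) = 0"
    using \<open>z' x = 0\<close> unfolding z'_def by (simp add: power2_eq_square power3_eq_cube algebra_simps)
  then have "x * (U' x - V' x) = -3 * (U x - V x)" using x01 by simp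
  ultimately have "0 < z'' x"
    unfolding z''_def using profile_gap_second_derivative_pos[OF assms(1) x01] res[OF x01] by blast
  with \<open>z'' x \<le> 0\<close> show False by simp
qed

lemma profile_solution_lt_supersolution:
  fixes U U' U'' R :: "real \<Rightarrow> real"
  assumes "d \<ge> 10" "profile_solution d a v v1 v2"
    and U: "\<And>t. 0 < t \<Longrightarrow> t < 1 \<Longrightarrow>
      (U has_real_derivative U' t) (at t) \<and> (U' has_real_derivative U'' t) (at t)"
    and super: "\<And>t. 0 < t \<Longrightarrow> t < 1 \<Longrightarrow> 0 \<le> profile_residual d t (U t) (U' t) (U'' t)"
    and lim_U: "(U \<longlongrightarrow> l) (at_right 0)"
    and "0 < \<alpha>" "R \<in> O[at_right 0](\<lambda>t. t^4)"
    and above: "\<forall>\<^sub>F t in at_right 0. 1 - a * t^2 + \<alpha> * t^2 + R t \<le> U t"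
    and "0 < y" "y < 1"
  shows "v y < U y"
proof (rule profile_comparison[where V' = v1 and V'' = v2, OF assms(1) U _ _ lim_U
      profile_solution_tendsto_1[OF assms(2)] _ assms(9,10)])
  have "\<forall>\<^sub>F t in at_right 0. 0 < U t - v t"
  proof (rule eventually_pos_of_quadratic_lower_bound[OF \<open>0 < \<alpha>\<close>])
    show "(\<lambda>t. R t - (v t - (1 - a * t^2))) \<in> O[at_right 0](\<lambda>t. t^4)"
      using assms(7) profile_solution_expansion[OF assms(2)] by (rule sum_in_bigo)
    show "\<forall>\<^sub>F t in at_right 0. \<alpha> * t^2 + (R t - (v t - (1 - a * t^2))) \<le> U t - v t"
      using above by eventually_elim simp
  qed
  then show "\<forall>\<^sub>F t in at_right 0. v t < U t" by simp
qed (use super profile_solutionD[OF assms(2)] in simp_all)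

lemma profile_solution_gt_subsolution:
  fixes V V' V'' R :: "real \<Rightarrow> real"
  assumes "d \<ge> 10" "profile_solution d a v v1 v2"
    and V: "\<And>t. 0 < t \<Longrightarrow> t < 1 \<Longrightarrow>
      (V has_real_derivative V' t) (at t) \<and> (V' has_real_derivative V'' t) (at t)"
    and sub: "\<And>t. 0 < t \<Longrightarrow> t < 1 \<Longrightarrow> profile_residual d t (V t) (V' t) (V'' t) \<le> 0"
    and lim_V: "(V \<longlongrightarrow> l) (at_right 0)"
    and "0 < \<alpha>" "R \<in> O[at_right 0](\<lambda>t. t^4)"
    and below: "\<forall>\<^sub>F t in at_right 0. V t \<le> 1 - a * t^2 - \<alpha> * t^2 + R t"
    and "0 < y" "y < 1"
  shows "V y < v y"
proof (rule profile_comparison[where U' = v1 and U'' = v2, OF assms(1) _ V _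
      profile_solution_tendsto_1[OF assms(2)] lim_V _ assms(9,10)])
  have "\<forall>\<^sub>F t in at_right 0. 0 < v t - V t"
  proof (rule eventually_pos_of_quadratic_lower_bound[OF \<open>0 < \<alpha>\<close>])
    show "(\<lambda>t. (v t - (1 - a * t^2)) - R t) \<in> O[at_right 0](\<lambda>t. t^4)"
      using profile_solution_expansion[OF assms(2)] assms(7) by (rule sum_in_bigo)
    show "\<forall>\<^sub>F t in at_right 0. \<alpha> * t^2 + ((v t - (1 - a * t^2)) - R t) \<le> v t - V t"
      using below by eventually_elim simp
  qed
  then show "\<forall>\<^sub>F t in at_right 0. V t < v t" by simp
qed (use sub profile_solutionD[OF assms(2)] in simp_all)

lemma profile_solution_strict_antimono:
  assumes "d \<ge> 10" "profile_solution d a u u1 u2" "profile_solution d b v v1 v2" "a < b"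
    and "0 < y" "y < 1"
  shows "v y < u y"
  by (rule profile_solution_lt_supersolution[where U' = u1 and U'' = u2 and \<alpha> = "b - a",
        OF assms(1,3) _ _ profile_solution_tendsto_1[OF assms(2)] _
        profile_solution_expansion[OF assms(2)] _ assms(5,6)])
     (use profile_solutionD[OF assms(2)] assms(4) in \<open>auto simp: algebra_simps\<close>)

lemma profile_residual_quartic_barrier:
  "profile_residual d y (1 + t * (y^2 + 4 * y^4)) (t * (2 * y + 16 * y^3)) (t * (2 + 48 * y^2))
   = t * ((8 * real d + 10) * y^4 - 80 * y^6)
     - (real d - 2) * t^2 * (y^2 + 4 * y^4)^2 * (3 + t * (y^2 + 4 * y^4))"
  unfolding profile_residual_def by algebra

lemma profile_residual_quartic_barrier_sign:
  assumes "d \<ge> 10" "0 < y" "y < 1" "\<bar>t\<bar> \<le> 1" "(real d - 2) * \<bar>t\<bar> \<le> 1/100"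
  shows "0 \<le> t * profile_residual d y (1 + t * (y^2 + 4 * y^4)) (t * (2 * y + 16 * y^3)) (t * (2 + 48 * y^2))"
proof -
  define g where "g = y^2 + 4 * y^4"
  have y42: "y^4 \<le> y^2" and y64: "y^6 \<le> y^4" using assms(2,3) by (auto intro: power_decreasing)
  have y2: "y^2 \<le> 1" using assms(2,3) by (simp add: power_le_one)
  have g: "0 \<le> g" "g \<le> 5 * y^2" unfolding g_def using y42 by auto
  have "g^2 \<le> (5 * y^2)^2" using g by (intro power_mono) auto
  then have g2: "g^2 \<le> 25 * y^4" by (simp add: power_mult_distrib flip: power_mult)
  have "\<bar>t * g\<bar> \<le> 1 * (5 * y^2)"
    unfolding abs_mult using g assms(4) by (intro mult_mono) auto
  then have "\<bar>3 + t * g\<bar> \<le> 8" using y2 by linarith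
  then have "(real d - 2) * \<bar>t\<bar> * (t^2 * g^2 * \<bar>3 + t * g\<bar>) \<le> 1/100 * (t^2 * (25 * y^4) * 8)"
    using assms(1,5) g2 by (intro mult_mono) auto
  moreover have "\<bar>t * ((real d - 2) * t^2 * g^2 * (3 + t * g))\<bar>
      = (real d - 2) * \<bar>t\<bar> * (t^2 * g^2 * \<bar>3 + t * g\<bar>)"
    using assms(1) by (simp add: abs_mult mult_ac)
  ultimately have nonlinear: "\<bar>t * ((real d - 2) * t^2 * g^2 * (3 + t * g))\<bar> \<le> 2 * t^2 * y^4"
    by simp
  have "10 * y^4 \<le> (8 * real d + 10) * y^4 - 80 * y^6"
    using assms(1) y64 mult_right_mono[of 10 "real d" "y^4"] by (simp add: algebra_simps)
  then have "t^2 * (10 * y^4) \<le> t^2 * ((8 * real d + 10) * y^4 - 80 * y^6)"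
    by (rule mult_left_mono) simp
  moreover have "t * profile_residual d y (1 + t * g) (t * (2 * y + 16 * y^3)) (t * (2 + 48 * y^2))
      = t^2 * ((8 * real d + 10) * y^4 - 80 * y^6) - t * ((real d - 2) * t^2 * g^2 * (3 + t * g))"
    unfolding profile_residual_quartic_barrier g_def by (simp add: power2_eq_square algebra_simps)
  ultimately show ?thesis using nonlinear unfolding g_def by (simp add: abs_le_iff)
qed

lemma profile_solution_0_between_barriers:
  assumes "d \<ge> 10" "profile_solution d 0 v v1 v2"
    and \<epsilon>: "0 < \<epsilon>" "\<epsilon> \<le> 1" "(real d - 2) * \<epsilon> \<le> 1/100"
    and y: "0 < y" "y < 1"
  shows "\<bar>v y - 1\<bar> < \<epsilon> * (y^2 + 4 * y^4)"
proof -
  define B where "B t s = 1 + t * (s^2 + 4 * s^4)" for t s :: real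
  define B' where "B' t s = t * (2 * s + 16 * s^3)" for t s :: real
  define B'' where "B'' t s = t * (2 + 48 * s^2)" for t s :: real
  have dB: "(B t has_real_derivative B' t s) (at s) \<and> (B' t has_real_derivative B'' t s) (at s)" for t s
    unfolding B_def B'_def B''_def by (auto intro!: derivative_eq_intros simp: algebra_simps)
  have lim_B: "(B t \<longlongrightarrow> 1) (at_right 0)" for t
    unfolding B_def by (auto intro!: tendsto_eq_intros)
  have residual_sign: "0 \<le> t * profile_residual d s (B t s) (B' t s) (B'' t s)"
    if "\<bar>t\<bar> = \<epsilon>" "0 < s" "s < 1" for t s
    unfolding B_def B'_def B''_def
    using profile_residual_quartic_barrier_sign[OF assms(1) that(2,3)] that \<epsilon> by simp
  have super: "0 \<le> profile_residual d s (B \<epsilon> s) (B' \<epsilon> s) (B'' \<epsilon> s)"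
    if "0 < s" "s < 1" for s
    using residual_sign[OF _ that, of \<epsilon>] \<epsilon>(1) by (simp add: zero_le_mult_iff)
  have sub: "profile_residual d s (B (-\<epsilon>) s) (B' (-\<epsilon>) s) (B'' (-\<epsilon>) s) \<le> 0"
    if "0 < s" "s < 1" for s
    using residual_sign[OF _ that, of "-\<epsilon>"] \<epsilon>(1) by (simp add: mult_le_0_iff)
  have "v y < B \<epsilon> y"
    by (rule profile_solution_lt_supersolution[where R = "\<lambda>s. 4 * \<epsilon> * s^4",
          OF assms(1,2) dB super lim_B \<epsilon>(1) _ _ y]) (auto simp: B_def algebra_simps)
  moreover have "B (-\<epsilon>) y < v y"
    by (rule profile_solution_gt_subsolution[where R = "\<lambda>s. - 4 * \<epsilon> * s^4",
          OF assms(1,2) dB sub lim_B \<epsilon>(1) _ _ y]) (auto simp: B_def algebra_simps)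
  ultimately show ?thesis unfolding B_def by (simp add: abs_less_iff algebra_simps)
qed

lemma profile_solution_0_limit_at_1:
  assumes "d \<ge> 10" "profile_solution d 0 v v1 v2" "(v \<longlongrightarrow> c) (at_left 1)"
  shows "c = 1"
proof -
  have "real d > 0" using assms(1) by simp
  have close: "\<bar>c - 1\<bar> \<le> 5 * \<epsilon>" if \<epsilon>: "0 < \<epsilon>" "\<epsilon> \<le> 1 / (100 * real d)" for \<epsilon>
  proof -
    have "real d * \<epsilon> \<le> 1/100"
      using \<epsilon> \<open>real d > 0\<close> by (simp add: field_simps)
    moreover have "1 * \<epsilon> \<le> real d * \<epsilon>" using \<epsilon> assms(1) by (intro mult_right_mono) auto
    ultimately have \<epsilon>': "\<epsilon> \<le> 1" "(real d - 2) * \<epsilon> \<le> 1/100"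
      using \<epsilon> unfolding left_diff_distrib by linarith+
    note between = profile_solution_0_between_barriers[OF assms(1,2) \<epsilon>(1) \<epsilon>']
    have lim: "((\<lambda>y. 1 + t * (y^2 + 4 * y^4)) \<longlongrightarrow> 1 + 5 * t) (at_left 1)" for t :: real
      by (auto intro!: tendsto_eq_intros)
    have "c \<le> 1 + 5 * \<epsilon>"
      using between by (intro tendsto_at_left_1_le[OF assms(3) lim]) (force simp: abs_less_iff)
    moreover have "1 + 5 * (-\<epsilon>) \<le> c"
      using between by (intro tendsto_at_left_1_le[OF lim assms(3)]) (force simp: abs_less_iff)
    ultimately show ?thesis by simp
  qed
  have "\<bar>c - 1\<bar> \<le> 0"
  proof (rule dense_ge_bounded)
    show "0 < 5 / (100 * real d)" using \<open>real d > 0\<close> by simp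
    show "\<bar>c - 1\<bar> \<le> w" if "0 < w" "w < 5 / (100 * real d)" for w
      using close[of "w / 5"] that by simp
  qed
  then show ?thesis by simp
qed

lemma profile_residual_inverse_sqrt:
  fixes a y :: real
  assumes "0 \<le> a"
  defines "S \<equiv> sqrt (1 + a * y^2)"
  shows "profile_residual d y (1 / S) (- a * y / S^3) (- a / S^3 + 3 * a^2 * y^2 / S^5)
    = 3 * a * (1 + a) * y^4 / S^5"
proof -
  have "0 < 1 + a * y^2" using assms by (simp add: add_pos_nonneg)
  then have S: "0 < S" "S^2 = 1 + a * y^2" unfolding S_def by auto
  have "profile_residual d y (1 / S) (- a * y / S^3) (- a / S^3 + 3 * a^2 * y^2 / S^5) * S^5
    = y^2 * (1 - y^2) * (- a * S^2 + 3 * a^2 * y^2) + ((real d - 3) * y - 2 * y^3) * (- a * y * S^2)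
      + (real d - 2) * S^2 * (S^2 - 1)"
    using S(1) unfolding profile_residual_def by (simp add: field_simps eval_nat_numeral)
  also have "\<dots> = 3 * a * (1 + a) * y^4"
    unfolding S(2) by (simp add: algebra_simps eval_nat_numeral)
  finally show ?thesis using S(1) by (simp add: field_simps)
qed

lemma profile_solution_bounds:
  assumes "d \<ge> 10" "profile_solution d a v v1 v2" "0 < a" "0 < y" "y < 1"
  shows "0 < v y" "v y < 1 / sqrt (1 + a * y^2)"
proof -
  note v = profile_solutionD[OF assms(2)] profile_solution_tendsto_1[OF assms(2)]
  show "0 < v y"
  proof (rule profile_comparison[where V' = "\<lambda>_. 0" and V'' = "\<lambda>_. 0" and U' = v1 and U'' = v2,
        OF assms(1) _ _ _ v(4) tendsto_const _ assms(4,5)])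
    show "\<forall>\<^sub>F s in at_right 0. 0 < v s"
      using order_tendstoD(1)[OF v(4), of 0] by simp
  qed (use v in \<open>simp_all add: profile_residual_def\<close>)
  define S where "S s = sqrt (1 + a * s^2)" for s
  have "((\<lambda>s. 1 / S s) \<longlongrightarrow> 1 / sqrt (1 + a * 0^2)) (at_right 0)"
    unfolding S_def by (intro tendsto_intros tendsto_ident_at) simp
  then have lim_S: "((\<lambda>s. 1 / S s) \<longlongrightarrow> 1) (at_right 0)" by simp
  show "v y < 1 / sqrt (1 + a * y^2)"
    unfolding S_def[symmetric]
  proof (rule profile_solution_lt_supersolution[where U' = "\<lambda>s. - a * s / S s ^ 3"
        and U'' = "\<lambda>s. - a / S s ^ 3 + 3 * a^2 * s^2 / S s ^ 5" and \<alpha> = "a/2" and R = "\<lambda>_. 0",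
        OF assms(1,2) _ _ lim_S _ _ _ assms(4,5)])
    show "\<forall>\<^sub>F s in at_right 0. 1 - a * s^2 + a/2 * s^2 + 0 \<le> 1 / S s"
      using inverse_sqrt_ge[of "a * s^2" for s] assms(3) unfolding S_def by simp
  qed (use assms(3) inverse_sqrt_derivatives[of a] profile_residual_inverse_sqrt[of a]
       in \<open>simp_all add: S_def\<close>)
qed

lemma profile_solution_limit_at_1_bounds:
  assumes "d \<ge> 10" "profile_solution d a v v1 v2" "0 < a" "(v \<longlongrightarrow> c) (at_left 1)"
  shows "0 \<le> c" "c \<le> 1 / sqrt (1 + a)"
proof -
  note bounds = profile_solution_bounds[OF assms(1-3)]
  show "0 \<le> c"
    using bounds(1) by (intro tendsto_at_left_1_le[OF tendsto_const assms(4)] less_imp_le)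
  have "((\<lambda>y. 1 / sqrt (1 + a * y^2)) \<longlongrightarrow> 1 / sqrt (1 + a * 1^2)) (at_left 1)"
    using assms(3) by (intro tendsto_intros tendsto_ident_at) simp
  then show "c \<le> 1 / sqrt (1 + a)"
    using bounds(2) by (intro tendsto_at_left_1_le[OF assms(4)] less_imp_le) simp_all
qed

theorem lemma2:
  fixes d :: nat
    and u u1 u2 :: "real \<Rightarrow> real \<Rightarrow> real"
    and c :: "real \<Rightarrow> real"
  assumes "d \<ge> 10"
    and "\<And>a. a \<ge> 0 \<Longrightarrow> profile_solution d a (u a) (u1 a) (u2 a)"
    and "\<And>a. a \<ge> 0 \<Longrightarrow> (u a \<longlongrightarrow> c a) (at_left 1)"
  shows "(\<forall>a b. 0 \<le> a \<and> a \<le> b \<longrightarrow> c b \<le> c a) \<and> c 0 = 1 \<and> (c \<longlongrightarrow> 0) at_top"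
proof (intro conjI allI impI)
  fix a b :: real
  assume ab: "0 \<le> a \<and> a \<le> b"
  show "c b \<le> c a"
  proof (rule tendsto_at_left_1_le[OF assms(3)[of b] assms(3)[of a]])
    show "u b y \<le> u a y" if "0 < y" "y < 1" for y
      using profile_solution_strict_antimono[OF assms(1) assms(2)[of a] assms(2)[of b] _ that] ab
      by (cases "a = b") auto
  qed (use ab in auto)
next
  show "c 0 = 1"
    by (rule profile_solution_0_limit_at_1[OF assms(1) assms(2) assms(3)]) simp_all
next
  have bounds: "0 \<le> c a" "c a \<le> 1 / sqrt (1 + a)" if "0 < a" for a
    using profile_solution_limit_at_1_bounds[OF assms(1) assms(2) that assms(3)] that by auto
  show "(c \<longlongrightarrow> 0) at_top"
  proof (rule tendsto_sandwich[of "\<lambda>_. 0" c at_top "\<lambda>a. 1 / sqrt (1 + a)"])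
    show "\<forall>\<^sub>F a in at_top. 0 \<le> c a"
      using eventually_gt_at_top[of 0] by eventually_elim (rule bounds)
    show "\<forall>\<^sub>F a in at_top. c a \<le> 1 / sqrt (1 + a)"
      using eventually_gt_at_top[of 0] by eventually_elim (rule bounds)
    show "((\<lambda>a::real. 1 / sqrt (1 + a)) \<longlongrightarrow> 0) at_top" by real_asymp
  qed simp
qed

end
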